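(* Fix $\alpha\in(0,1)$. Let $X_i$ take values $-1,0,1$ with probabilities $\frac{1-\alpha}{2-\alpha},\ \frac{\alpha}{2-\alpha},\ \frac{1-\alpha}{2-\alpha}$ respectively, and $Y_i=X_i+\epsilon_i$ with $\epsilon_i\mid X_i\sim\mathrm{Uniform}([-2|X_i|,2|X_i|])$ (so $\epsilon_i=0$ when $X_i=0$), with $(X_i,Y_i)$, $i=1,\ldots,n+1$, i.i.d. Let $V(x,y)=|y-x|$, take the localizer $H_{i,j}=\mathbb 1\{|X_j-X_i|\le 1.5\}$, and use $\tilde\alpha=\alpha$ without tuning. Then, as $n\to\infty$, $\mathbb P\{V_{n+1}\le Q(\alpha;\hat{\mathcal F})\}\to\frac{\alpha}{2-\alpha}=1-\frac{2(1-\alpha)}{2-\alpha}$, i.e. the coverage falls short of $\alpha$ asymptotically by $\frac{\alpha(1-\alpha)}{2-\alpha}$.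
   Context: $p^H_{i,j}=H_{i,j}/\sum_{k=1}^{n+1}H_{i,k}$; $V_i=V(X_i,Y_i)$; $\hat{\mathcal F}=\sum_{j=1}^{n}p^H_{n+1,j}\delta_{V_j}+p^H_{n+1,n+1}\delta_{\infty}$, where $\delta_v$ is the point mass at $v$. For a probability distribution $\mathcal F$ on $\mathbb R\cup\{\infty\}$ and $a\in[0,1]$, $Q(a;\mathcal F)=\inf\{t:\mathbb P_{T\sim\mathcal F}(T\le t)\ge a\}$. *)

theory Defs
  imports "HOL-Probability.Probability"
begin

definition score :: "real \<Rightarrow> real \<Rightarrow> real" where
  "score x y = \<bar>y - x\<bar>"

definition loc :: "real \<Rightarrow> real \<Rightarrow> real" where
  "loc xi xj = (if \<bar>xj - xi\<bar> \<le> 3/2 then 1 else 0)"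

definition pH :: "(real \<Rightarrow> real \<Rightarrow> real) \<Rightarrow> (nat \<Rightarrow> real) \<Rightarrow> nat \<Rightarrow> nat \<Rightarrow> nat \<Rightarrow> real" where
  "pH H x n i j = H (x i) (x j) / (\<Sum>k=1..n+1. H (x i) (x k))"

definition discr_quantile :: "real \<Rightarrow> (nat \<Rightarrow> ereal) \<Rightarrow> (nat \<Rightarrow> real) \<Rightarrow> nat set \<Rightarrow> ereal" where
  "discr_quantile a pts w I = Inf {t. (\<Sum>j\<in>I. if pts j \<le> t then w j else 0) \<ge> a}"

definition Qhat :: "(real \<Rightarrow> real \<Rightarrow> real) \<Rightarrow> real \<Rightarrow> (nat \<Rightarrow> real) \<Rightarrow> (nat \<Rightarrow> real) \<Rightarrow> nat \<Rightarrow> ereal" where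
  "Qhat H a x v n = discr_quantile a
      (\<lambda>j. if j = n + 1 then \<infinity> else ereal (v j)) (pH H x n (n+1)) {1..n+1}"

end

theory Submission
  imports Defs "HOL-Real_Asymp.Real_Asymp"
begin

text \<open>
  Almost surely, the score of the test point is 0 exactly when its covariate is 0, an event of probability
  \<open>\<alpha>/(2-\<alpha>)\<close>, and then it is always covered. If instead the test covariate is \<open>s = \<plusminus>1\<close>, the
  localizer only sees the points with covariate \<open>0\<close> or \<open>s\<close>. Among these, the ones at \<open>0\<close> (a fraction
  \<open>\<alpha>\<close> of them) have score 0, and a positive fraction of the ones at \<open>s\<close> have score at most any
  fixed \<open>d > 0\<close>; so by Hoeffding's inequality the weighted proportion of scores below \<open>d\<close>
  exceeds \<open>\<alpha>\<close> with probability tending to 1, and the test point is covered only if its own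
  score is below \<open>d\<close>, which has probability \<open>O(d)\<close>.
\<close>

lemma le_discr_quantile_iff:
  fixes v w :: "nat \<Rightarrow> real"
  assumes w: "\<And>j. w j \<ge> 0" and a: "a > 0"
  shows "ereal v0 \<le> discr_quantile a (\<lambda>j. if j = n + 1 then \<infinity> else ereal (v j)) w {1..n+1}
     \<longleftrightarrow> (\<Sum>j\<in>{1..n}. if v j < v0 then w j else 0) < a"
    (is "_ \<le> discr_quantile a ?pts w _ \<longleftrightarrow> ?below < a")
proof
  assume le: "ereal v0 \<le> discr_quantile a ?pts w {1..n+1}"
  show "?below < a"
  proof (rule ccontr)
    assume "\<not> ?below < a"
    hence ge: "?below \<ge> a" by simp
    define J where "J = {j\<in>{1..n}. v j < v0}"
    have "J \<noteq> {}"
    proof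
      assume "J = {}"
      hence "?below = 0" unfolding J_def by (intro sum.neutral) auto
      with ge a show False by simp
    qed
    moreover have "finite J" by (simp add: J_def)
    ultimately have m_lt: "Max (v ` J) < v0" by (subst Max_less_iff) (auto simp: J_def)
    have "?below \<le> (\<Sum>j\<in>{1..n}. if ?pts j \<le> ereal (Max (v ` J)) then w j else 0)"
      using \<open>finite J\<close> by (intro sum_mono) (auto simp: w J_def)
    also have "\<dots> \<le> (\<Sum>j\<in>{1..n+1}. if ?pts j \<le> ereal (Max (v ` J)) then w j else 0)"
      by (intro sum_mono2) (auto simp: w)
    finally have "discr_quantile a ?pts w {1..n+1} \<le> ereal (Max (v ` J))"
      using ge unfolding discr_quantile_def by (intro Inf_lower) simp
    with le have "ereal v0 \<le> ereal (Max (v ` J))" by (rule order.trans)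
    with m_lt show False by simp
  qed
next
  assume lt: "?below < a"
  show "ereal v0 \<le> discr_quantile a ?pts w {1..n+1}"
    unfolding discr_quantile_def
  proof (rule Inf_greatest, rule ccontr)
    fix t assume t: "t \<in> {t. (\<Sum>j\<in>{1..n+1}. if ?pts j \<le> t then w j else 0) \<ge> a}"
      and "\<not> ereal v0 \<le> t"
    hence t_lt: "t < ereal v0" by simp
    hence "t \<noteq> \<infinity>" by auto
    have "{1..n+1} = insert (n+1) {1..n}" by auto
    hence "(\<Sum>j\<in>{1..n+1}. if ?pts j \<le> t then w j else 0)
         = (\<Sum>j\<in>{1..n}. if ?pts j \<le> t then w j else 0)"
      using \<open>t \<noteq> \<infinity>\<close> by (simp add: sum.insert)
    also have "\<dots> \<le> ?below"
      using t_lt w by (intro sum_mono) (auto dest: order.strict_trans1)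
    finally show False using t lt by simp
  qed
qed

lemma (in prob_space) prob_indep_sum_less_tendsto_zero:
  fixes Z :: "nat \<Rightarrow> 'a \<Rightarrow> real"
  assumes indep: "indep_vars (\<lambda>_. borel) Z UNIV"
    and bounded: "\<And>j x. x \<in> space M \<Longrightarrow> \<bar>Z j x\<bar> \<le> B" and B: "B > 0"
    and mean: "\<And>j. expectation (Z j) \<ge> c" and c: "c > 0"
  shows "(\<lambda>n. prob {x\<in>space M. (\<Sum>j\<in>{1..n}. Z j x) < a}) \<longlonglongrightarrow> 0"
proof -
  define k where "k = c\<^sup>2 / (8 * B\<^sup>2)"
  have k: "k > 0" using B c by (simp add: k_def)
  have large_n: "eventually (\<lambda>n. 2 * a \<le> real n * c \<and> n \<ge> 1) sequentially"
    using c by (intro eventually_conj eventually_ge_at_top) real_asymp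
  have upper: "eventually (\<lambda>n. prob {x\<in>space M. (\<Sum>j\<in>{1..n}. Z j x) < a} \<le> exp (- (k * real n)))
      sequentially"
  proof (rule eventually_mono[OF large_n], elim conjE)
    fix n :: nat assume n_c: "2 * a \<le> real n * c" and "n \<ge> 1"
    hence n: "real n > 0" by simp
    hence nc: "real n * c > 0" using c by simp
    define \<mu> where "\<mu> = (\<Sum>j\<in>{1..n}. expectation (Z j))"
    interpret Hoeffding_ineq M "{1..n}" Z "\<lambda>_. -B" "\<lambda>_. B" \<mu>
    proof unfold_locales
      show "indep_vars (\<lambda>_. borel) Z {1..n}" using indep by (rule indep_vars_subset) simp
      fix j show "AE x in M. Z j x \<in> {-B..B}"
      proof (rule AE_I2)
        fix x assume "x \<in> space M"
        from bounded[OF this, of j] show "Z j x \<in> {-B..B}" by (simp add: abs_le_iff)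
      qed
    qed (simp_all add: \<mu>_def)
    have \<mu>: "real n * c \<le> \<mu>"
      using sum_mono[of "{1..n}" "\<lambda>_. c", OF mean] by (simp add: \<mu>_def)
    have "prob {x\<in>space M. (\<Sum>j\<in>{1..n}. Z j x) < a}
        \<le> prob {x\<in>space M. (\<Sum>j\<in>{1..n}. Z j x) \<le> \<mu> - (\<mu> - a)}"
      by (intro finite_measure_mono) (auto, measurable)
    also have "\<dots> \<le> exp (-2 * (\<mu> - a)\<^sup>2 / (\<Sum>j\<in>{1..n}. (B - - B)\<^sup>2))"
      using n_c nc \<mu> B \<open>n \<ge> 1\<close> by (intro Hoeffding_ineq_le) auto
    also have "\<dots> \<le> exp (- (k * real n))"
    proof -
      have "k * real n = 2 * (real n * c / 2)\<^sup>2 / (4 * real n * B\<^sup>2)"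
        using n B by (simp add: k_def power2_eq_square field_simps)
      also have "\<dots> \<le> 2 * (\<mu> - a)\<^sup>2 / (4 * real n * B\<^sup>2)"
        using n n_c \<mu> c B by (intro divide_right_mono mult_left_mono power_mono) auto
      finally show ?thesis by (simp add: power2_eq_square)
    qed
    finally show "prob {x\<in>space M. (\<Sum>j\<in>{1..n}. Z j x) < a} \<le> exp (- (k * real n))" .
  qed
  have lim: "(\<lambda>n. exp (- (k * real n))) \<longlonglongrightarrow> 0" using k by real_asymp
  show ?thesis by (rule tendsto_sandwich[OF _ upper tendsto_const lim]) simp
qed

locale ternary_noise_model = prob_space M for M :: "'w measure" +
  fixes X Y :: "nat \<Rightarrow> 'w \<Rightarrow> real" and \<alpha> :: real
  assumes alpha: "0 < \<alpha>" "\<alpha> < 1"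
    and meas[measurable]: "\<And>i. X i \<in> borel_measurable M" "\<And>i. Y i \<in> borel_measurable M"
    and indep: "indep_vars (\<lambda>_. borel \<Otimes>\<^sub>M borel) (\<lambda>i \<omega>. (X i \<omega>, Y i \<omega>)) UNIV"
    and Xm1: "\<And>i. prob {\<omega>\<in>space M. X i \<omega> = -1} = (1 - \<alpha>) / (2 - \<alpha>)"
    and X0: "\<And>i. prob {\<omega>\<in>space M. X i \<omega> = 0} = \<alpha> / (2 - \<alpha>)"
    and X1: "\<And>i. prob {\<omega>\<in>space M. X i \<omega> = 1} = (1 - \<alpha>) / (2 - \<alpha>)"
    and eps0: "\<And>i. prob {\<omega>\<in>space M. X i \<omega> = 0 \<and> Y i \<omega> - X i \<omega> = 0}
                   = prob {\<omega>\<in>space M. X i \<omega> = 0}"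
    and epsU: "\<And>i x A. x \<in> {-1, 1} \<Longrightarrow> A \<in> sets borel \<Longrightarrow>
                 prob {\<omega>\<in>space M. X i \<omega> = x \<and> Y i \<omega> - X i \<omega> \<in> A}
                 = prob {\<omega>\<in>space M. X i \<omega> = x}
                   * (measure lborel (A \<inter> {-2*\<bar>x\<bar>..2*\<bar>x\<bar>}) / (4*\<bar>x\<bar>))"
begin

lemma loc_nonneg: "loc x y \<ge> 0"
  by (simp add: loc_def)

definition V :: "nat \<Rightarrow> 'w \<Rightarrow> real" where
  "V i \<omega> = score (X i \<omega>) (Y i \<omega>)"

lemma V_measurable[measurable]: "V i \<in> borel_measurable M"
  unfolding V_def score_def by measurable

lemma V_nonneg: "V i \<omega> \<ge> 0"
  by (simp add: V_def score_def)

definition p_side :: real where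
  "p_side = (1 - \<alpha>) / (2 - \<alpha>)"

lemma p_side_pos: "p_side > 0"
  using alpha by (simp add: p_side_def)

lemma prob_X_side: "s \<in> {-1, 1} \<Longrightarrow> prob {\<omega>\<in>space M. X i \<omega> = s} = p_side"
  using Xm1 X1 by (auto simp: p_side_def)

lemma prob_X_not_side: "prob {\<omega>\<in>space M. X i \<omega> \<notin> {-1, 1}} = \<alpha> / (2 - \<alpha>)"
proof -
  have "{\<omega>\<in>space M. X i \<omega> \<notin> {-1, 1}}
      = space M - ({\<omega>\<in>space M. X i \<omega> = -1} \<union> {\<omega>\<in>space M. X i \<omega> = 1})" by auto
  also have "prob \<dots> = 1 - (p_side + p_side)"
    by (subst prob_compl, measurable, subst finite_measure_Union)
      (auto simp: prob_X_side)
  also have "\<dots> = \<alpha> / (2 - \<alpha>)"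
    using alpha by (simp add: p_side_def add_divide_distrib[symmetric] diff_divide_eq_iff)
  finally show ?thesis .
qed

lemma prob_X_side_V_le:
  assumes s: "s \<in> {-1, 1}" and d: "0 < d" "d \<le> 2"
  shows "prob {\<omega>\<in>space M. X i \<omega> = s \<and> V i \<omega> \<le> d} = p_side * d / 2"
proof -
  have "{\<omega>\<in>space M. X i \<omega> = s \<and> V i \<omega> \<le> d}
      = {\<omega>\<in>space M. X i \<omega> = s \<and> Y i \<omega> - X i \<omega> \<in> {-d..d}}"
    by (auto simp: V_def score_def abs_le_iff)
  also have "prob \<dots> = p_side * (measure lborel ({-d..d} \<inter> {-2*\<bar>s\<bar>..2*\<bar>s\<bar>}) / (4*\<bar>s\<bar>))"
    by (rule epsU[OF s, where A="{-d..d}", unfolded prob_X_side[OF s]]) simp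
  also have "\<dots> = p_side * d / 2"
    using s d by (auto simp: min_def max_def)
  finally show ?thesis .
qed

definition local_excess :: "real \<Rightarrow> real \<Rightarrow> nat \<Rightarrow> 'w \<Rightarrow> real" where
  "local_excess s d j \<omega> = loc s (X j \<omega>) * ((if V j \<omega> \<le> d then 1 else 0) - \<alpha>)"

lemma local_excess_measurable[measurable]: "local_excess s d j \<in> borel_measurable M"
  unfolding local_excess_def loc_def by measurable

lemma local_excess_indep: "indep_vars (\<lambda>_. borel) (local_excess s d) UNIV"
proof -
  have "indep_vars (\<lambda>_. borel)
      (\<lambda>j \<omega>. (\<lambda>(x, y). loc s x * ((if score x y \<le> d then 1 else 0) - \<alpha>)) (X j \<omega>, Y j \<omega>)) UNIV"
    by (rule indep_vars_compose2[OF indep]) (simp add: loc_def score_def)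
  thus ?thesis by (simp add: local_excess_def[abs_def] V_def)
qed

lemma local_excess_bounded: "\<bar>local_excess s d j \<omega>\<bar> \<le> 1"
  using alpha by (simp add: local_excess_def loc_def)

lemma expectation_local_excess_ge:
  assumes s: "s \<in> {-1, 1}" and d: "0 < d" "d \<le> 2"
  shows "expectation (local_excess s d j) \<ge> p_side * d / 2"
proof -
  define near where "near = {\<omega>\<in>space M. \<bar>X j \<omega> - s\<bar> \<le> 3/2}"
  define near_le where "near_le = {\<omega>\<in>space M. \<bar>X j \<omega> - s\<bar> \<le> 3/2 \<and> V j \<omega> \<le> d}"
  have [measurable]: "near \<in> sets M" "near_le \<in> sets M"
    unfolding near_def near_le_def by measurable
  have "expectation (local_excess s d j) = expectation (\<lambda>\<omega>. indicator near_le \<omega> - \<alpha> * indicator near \<omega>)"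
    by (intro Bochner_Integration.integral_cong)
      (auto simp: local_excess_def loc_def near_def near_le_def indicator_def abs_minus_commute)
  also have "\<dots> = prob near_le - \<alpha> * prob near"
    by (subst Bochner_Integration.integral_diff)
      (auto intro!: integrable_real_indicator simp: less_top[symmetric])
  finally have expectation_eq: "expectation (local_excess s d j) = prob near_le - \<alpha> * prob near" .
  \<comment> \<open>Both the points at 0 (with score 0) and those at \<open>s\<close> count towards \<open>near_le\<close>.\<close>
  have "\<alpha> / (2 - \<alpha>) + p_side * d / 2
      = prob {\<omega>\<in>space M. X j \<omega> = 0 \<and> Y j \<omega> - X j \<omega> = 0} + prob {\<omega>\<in>space M. X j \<omega> = s \<and> V j \<omega> \<le> d}"
    using eps0 X0 prob_X_side_V_le[OF s d] by simp
  also have "\<dots> = prob ({\<omega>\<in>space M. X j \<omega> = 0 \<and> Y j \<omega> - X j \<omega> = 0} \<union> {\<omega>\<in>space M. X j \<omega> = s \<and> V j \<omega> \<le> d})"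
    using s by (intro finite_measure_Union[symmetric]) auto
  also have "\<dots> \<le> prob near_le"
    using s d by (intro finite_measure_mono) (auto simp: near_le_def V_def score_def)
  finally have near_le_ge: "\<alpha> / (2 - \<alpha>) + p_side * d / 2 \<le> prob near_le" .
  have "prob near \<le> prob (space M - {\<omega>\<in>space M. X j \<omega> = -s})"
    using s by (intro finite_measure_mono) (auto simp: near_def)
  also have "\<dots> = 1 - p_side"
    using s by (subst prob_compl) (auto simp: prob_X_side)
  also have "\<dots> = 1 / (2 - \<alpha>)"
    using alpha by (simp add: p_side_def diff_divide_eq_iff)
  finally have "\<alpha> * prob near \<le> \<alpha> * (1 / (2 - \<alpha>))"
    using alpha by (intro mult_left_mono) auto
  with near_le_ge expectation_eq show ?thesis by simp
qed

definition below_level :: "real \<Rightarrow> real \<Rightarrow> nat \<Rightarrow> 'w set" where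
  "below_level s d n = {\<omega>\<in>space M. (\<Sum>j\<in>{1..n}. local_excess s d j \<omega>) < \<alpha>}"

lemma prob_below_level_tendsto_zero:
  assumes "s \<in> {-1, 1}" "0 < d" "d \<le> 2"
  shows "(\<lambda>n. prob (below_level s d n)) \<longlonglongrightarrow> 0"
  unfolding below_level_def
  using p_side_pos assms
  by (intro prob_indep_sum_less_tendsto_zero[OF local_excess_indep local_excess_bounded _
        expectation_local_excess_ge]) auto

definition weight_total :: "nat \<Rightarrow> 'w \<Rightarrow> real" where
  "weight_total n \<omega> = (\<Sum>k\<in>{1..n+1}. loc (X (n+1) \<omega>) (X k \<omega>))"

lemma weight_total_eq: "weight_total n \<omega> = 1 + (\<Sum>j\<in>{1..n}. loc (X (n+1) \<omega>) (X j \<omega>))"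
proof -
  have "{1..n+1} = insert (n+1) {1..n}" by auto
  thus ?thesis by (simp add: weight_total_def loc_def)
qed

lemma weight_total_ge_1: "weight_total n \<omega> \<ge> 1"
  unfolding weight_total_eq by (simp add: sum_nonneg loc_nonneg)

definition coverage_event :: "nat \<Rightarrow> 'w set" where
  "coverage_event n =
     {\<omega>\<in>space M. ereal (V (n+1) \<omega>) \<le> Qhat loc \<alpha> (\<lambda>i. X i \<omega>) (\<lambda>i. V i \<omega>) n}"

lemma coverage_event_eq:
  "coverage_event n = {\<omega>\<in>space M.
     (\<Sum>j\<in>{1..n}. if V j \<omega> < V (n+1) \<omega> then loc (X (n+1) \<omega>) (X j \<omega>) else 0) < \<alpha> * weight_total n \<omega>}"
proof -
  have "ereal (V (n+1) \<omega>) \<le> Qhat loc \<alpha> (\<lambda>i. X i \<omega>) (\<lambda>i. V i \<omega>) n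
    \<longleftrightarrow> (\<Sum>j\<in>{1..n}. if V j \<omega> < V (n+1) \<omega> then loc (X (n+1) \<omega>) (X j \<omega>) else 0) < \<alpha> * weight_total n \<omega>"
    for \<omega>
  proof -
    have pos: "weight_total n \<omega> > 0" using weight_total_ge_1[of n \<omega>] by simp
    have "ereal (V (n+1) \<omega>) \<le> Qhat loc \<alpha> (\<lambda>i. X i \<omega>) (\<lambda>i. V i \<omega>) n
      \<longleftrightarrow> (\<Sum>j\<in>{1..n}. if V j \<omega> < V (n+1) \<omega> then pH loc (\<lambda>i. X i \<omega>) n (n+1) j else 0) < \<alpha>"
      unfolding Qhat_def using alpha
      by (intro le_discr_quantile_iff) (auto simp: pH_def intro!: divide_nonneg_nonneg add_nonneg_nonneg sum_nonneg loc_nonneg)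
    also have "(\<Sum>j\<in>{1..n}. if V j \<omega> < V (n+1) \<omega> then pH loc (\<lambda>i. X i \<omega>) n (n+1) j else 0)
      = (\<Sum>j\<in>{1..n}. if V j \<omega> < V (n+1) \<omega> then loc (X (n+1) \<omega>) (X j \<omega>) else 0) / weight_total n \<omega>"
      unfolding sum_divide_distrib by (intro sum.cong) (auto simp: pH_def weight_total_def)
    finally show ?thesis using pos by (simp add: divide_less_eq)
  qed
  thus ?thesis by (auto simp: coverage_event_def)
qed

lemma coverage_event_sets[measurable]: "coverage_event n \<in> sets M"
  unfolding coverage_event_eq weight_total_def loc_def by measurable

lemma prob_coverage_event_ge: "\<alpha> / (2 - \<alpha>) \<le> prob (coverage_event n)"
proof -
  have "{\<omega>\<in>space M. X (n+1) \<omega> = 0 \<and> Y (n+1) \<omega> - X (n+1) \<omega> = 0} \<subseteq> coverage_event n"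
  proof
    fix \<omega> assume \<omega>: "\<omega> \<in> {\<omega>\<in>space M. X (n+1) \<omega> = 0 \<and> Y (n+1) \<omega> - X (n+1) \<omega> = 0}"
    hence "V (n+1) \<omega> = 0" by (simp add: V_def score_def)
    hence "(\<Sum>j\<in>{1..n}. if V j \<omega> < V (n+1) \<omega> then loc (X (n+1) \<omega>) (X j \<omega>) else 0) = 0"
      by (simp add: V_nonneg leD)
    moreover have "\<alpha> * weight_total n \<omega> > 0"
      using alpha weight_total_ge_1[of n \<omega>] by simp
    ultimately show "\<omega> \<in> coverage_event n" using \<omega> by (simp add: coverage_event_eq)
  qed
  hence "prob {\<omega>\<in>space M. X (n+1) \<omega> = 0 \<and> Y (n+1) \<omega> - X (n+1) \<omega> = 0} \<le> prob (coverage_event n)"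
    by (intro finite_measure_mono) auto
  thus ?thesis using eps0 X0 by simp
qed

lemma coverage_event_imp_below_level:
  assumes \<omega>: "\<omega> \<in> coverage_event n" and s: "X (n+1) \<omega> = s" and V_gt: "V (n+1) \<omega> > d"
  shows "\<omega> \<in> below_level s d n"
proof -
  have "(\<Sum>j\<in>{1..n}. local_excess s d j \<omega>)
      = (\<Sum>j\<in>{1..n}. loc s (X j \<omega>) * (if V j \<omega> \<le> d then 1 else 0)) - \<alpha> * (\<Sum>j\<in>{1..n}. loc s (X j \<omega>))"
    by (simp add: local_excess_def sum_subtractf sum_distrib_left right_diff_distrib mult.commute)
  also have "(\<Sum>j\<in>{1..n}. loc s (X j \<omega>) * (if V j \<omega> \<le> d then 1 else 0))
      \<le> (\<Sum>j\<in>{1..n}. if V j \<omega> < V (n+1) \<omega> then loc (X (n+1) \<omega>) (X j \<omega>) else 0)"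
    using s V_gt by (intro sum_mono) (auto simp: loc_def)
  also have "\<dots> < \<alpha> * weight_total n \<omega>"
    using \<omega> by (simp add: coverage_event_eq)
  finally show ?thesis
    using \<omega> s by (simp add: below_level_def weight_total_eq coverage_event_def algebra_simps)
qed

lemma prob_coverage_event_le:
  assumes d: "0 < d" "d \<le> 2"
  shows "prob (coverage_event n) \<le> \<alpha> / (2 - \<alpha>) + d + (\<Sum>s\<in>{-1, 1}. prob (below_level s d n))"
proof -
  define small where "small s = {\<omega>\<in>space M. X (n+1) \<omega> = s \<and> V (n+1) \<omega> \<le> d}" for s
  define other where "other = {\<omega>\<in>space M. X (n+1) \<omega> \<notin> {-1, 1}}"
  have sets[measurable]: "small s \<in> sets M" "other \<in> sets M" "below_level s d n \<in> sets M" for s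
    unfolding small_def other_def below_level_def by measurable
  have union_sets: "(\<Union>s\<in>{-1, 1}. small s \<union> below_level s d n) \<in> sets M"
    by (intro sets.finite_UN) (simp_all add: sets sets.Un)
  have "coverage_event n \<subseteq> other \<union> (\<Union>s\<in>{-1, 1}. small s \<union> below_level s d n)"
  proof
    fix \<omega> assume \<omega>: "\<omega> \<in> coverage_event n"
    have "\<omega> \<in> below_level (X (n+1) \<omega>) d n" if "V (n+1) \<omega> > d"
      using coverage_event_imp_below_level[OF \<omega> refl that] .
    with \<omega> show "\<omega> \<in> other \<union> (\<Union>s\<in>{-1, 1}. small s \<union> below_level s d n)"
      by (cases "V (n+1) \<omega> > d") (auto simp: small_def other_def coverage_event_def)
  qed
  hence "prob (coverage_event n) \<le> prob (other \<union> (\<Union>s\<in>{-1, 1}. small s \<union> below_level s d n))"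
    by (intro finite_measure_mono sets.Un sets union_sets)
  also have "\<dots> \<le> prob other + prob (\<Union>s\<in>{-1, 1}. small s \<union> below_level s d n)"
    by (intro measure_Un_le sets union_sets)
  also have "prob (\<Union>s\<in>{-1, 1}. small s \<union> below_level s d n)
      \<le> (\<Sum>s\<in>{-1, 1}. prob (small s \<union> below_level s d n))"
    by (rule measure_UNION_le) (simp_all add: sets sets.Un)
  also have "\<dots> \<le> (\<Sum>s\<in>{-1, 1}. prob (small s) + prob (below_level s d n))"
    by (intro sum_mono measure_Un_le sets)
  also have "\<dots> = p_side * d + (\<Sum>s\<in>{-1, 1}. prob (below_level s d n))"
    using d by (simp add: small_def prob_X_side_V_le)
  also have "prob other = \<alpha> / (2 - \<alpha>)"
    unfolding other_def by (rule prob_X_not_side)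
  finally have "prob (coverage_event n)
      \<le> \<alpha> / (2 - \<alpha>) + p_side * d + (\<Sum>s\<in>{-1, 1}. prob (below_level s d n))" by simp
  moreover have "p_side * d \<le> 1 * d"
    using alpha d by (intro mult_right_mono) (auto simp: p_side_def)
  ultimately show ?thesis by simp
qed

lemma prob_coverage_event_tendsto: "(\<lambda>n. prob (coverage_event n)) \<longlonglongrightarrow> \<alpha> / (2 - \<alpha>)"
proof (rule tendstoI)
  fix r :: real assume r: "r > 0"
  define d where "d = min 2 (r/2)"
  have d: "0 < d" "d \<le> 2" "d \<le> r/2" using r by (auto simp: d_def)
  have "(\<lambda>n. \<Sum>s\<in>{-1, 1}. prob (below_level s d n)) \<longlonglongrightarrow> 0"
    using d by (intro tendsto_null_sum prob_below_level_tendsto_zero) auto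
  hence "eventually (\<lambda>n. (\<Sum>s\<in>{-1, 1}. prob (below_level s d n)) < r/2) sequentially"
    using r by (intro order_tendstoD(2)) auto
  thus "eventually (\<lambda>n. dist (prob (coverage_event n)) (\<alpha> / (2 - \<alpha>)) < r) sequentially"
  proof eventually_elim
    case (elim n)
    thus ?case using prob_coverage_event_ge[of n] prob_coverage_event_le[OF d(1,2), of n] d
      by (simp add: dist_real_def)
  qed
qed

end

theorem mainTheorem6:
  fixes M :: "'w measure" and X Y :: "nat \<Rightarrow> 'w \<Rightarrow> real" and \<alpha> :: real
  assumes alpha: "0 < \<alpha>" "\<alpha> < 1"
    and P: "prob_space M"
    and meas: "\<And>i. X i \<in> borel_measurable M" "\<And>i. Y i \<in> borel_measurable M"
    and indep: "prob_space.indep_vars M (\<lambda>_. borel \<Otimes>\<^sub>M borel) (\<lambda>i \<omega>. (X i \<omega>, Y i \<omega>)) UNIV"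
    and Xm1: "\<And>i. measure M {\<omega>\<in>space M. X i \<omega> = -1} = (1 - \<alpha>) / (2 - \<alpha>)"
    and X0: "\<And>i. measure M {\<omega>\<in>space M. X i \<omega> = 0} = \<alpha> / (2 - \<alpha>)"
    and X1: "\<And>i. measure M {\<omega>\<in>space M. X i \<omega> = 1} = (1 - \<alpha>) / (2 - \<alpha>)"
    and eps0: "\<And>i. measure M {\<omega>\<in>space M. X i \<omega> = 0 \<and> Y i \<omega> - X i \<omega> = 0}
                   = measure M {\<omega>\<in>space M. X i \<omega> = 0}"
    and epsU: "\<And>i x A. x \<in> {-1, 1} \<Longrightarrow> A \<in> sets borel \<Longrightarrow>
                 measure M {\<omega>\<in>space M. X i \<omega> = x \<and> Y i \<omega> - X i \<omega> \<in> A}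
                 = measure M {\<omega>\<in>space M. X i \<omega> = x}
                   * (measure lborel (A \<inter> {-2*\<bar>x\<bar>..2*\<bar>x\<bar>}) / (4*\<bar>x\<bar>))"
  shows "(\<lambda>n. measure M {\<omega>\<in>space M.
            ereal (score (X (n+1) \<omega>) (Y (n+1) \<omega>))
              \<le> Qhat loc \<alpha> (\<lambda>i. X i \<omega>) (\<lambda>i. score (X i \<omega>) (Y i \<omega>)) n})
         \<longlonglongrightarrow> \<alpha> / (2 - \<alpha>)"
proof -
  interpret ternary_noise_model M X Y \<alpha>
    using assms by (simp add: ternary_noise_model_def ternary_noise_model_axioms_def)
  show ?thesis
    using prob_coverage_event_tendsto by (simp add: coverage_event_def V_def)
qed

end
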